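(* Let $\sum_{\mathbf n\in\mathbb N_0^d}a_{\mathbf n}W_{\mathbf n}$ be a $d$-fold Walsh series and $\tau$ the quasimeasure generated by it. If $\mathbf g\notin\operatorname{supp}\tau$, then there is $w=w(\mathbf g)\in\mathbb N_0$ such that $S_{2^w\mathbf M}(\mathbf g)=0$ for all $\mathbf M\in\mathbb N^d$. As $w$ one may take the smallest rank of a dyadic cube $\Delta^{(w)}\ni\mathbf g$ such that $\tau(\Delta)=0$ for every dyadic cube $\Delta\subset\Delta^{(w)}$.
   Context: Fix $d\ge2$. $\mathbb G$ is the dyadic group: sequences $g=(g_k)_{k\ge0}$, $g_k\in\{0,1\}$, coordinatewise addition mod 2, product topology; $\mathbb G^d$ its $d$-th power. For $n\in\mathbb N_0$, $n=\sum_kn_k2^k$, $n_k\in\{0,1\}$. Dyadic interval of rank $k$: $\Delta^{(k)}_m=\{g: g_t=m_{k-1-t},\ 0\le t<k\}$; dyadic cube of rank $k$: $\Delta^{(k)}_{\mathbf m}=\prod_l\Delta^{(k)}_{m^l}$. Vector order coordinatewise, $\mathbf 1=(1,\dots,1)$. Walsh functions $W_n(g)=\prod_k(-1)^{g_kn_k}$, $W_{\mathbf n}(\mathbf g)=\prod_lW_{n^l}(g^l)$. Partial sums $S_{\mathbf N}(\mathbf g)=\sum_{\mathbf n<\mathbf N}a_{\mathbf n}W_{\mathbf n}(\mathbf g)$. Quasimeasure: $\tau$ on dyadic cubes with $\tau(\Delta^{(k)}_{\mathbf m})=\sum_{\boldsymbol\sigma\in\{0,1\}^d}\tau(\Delta^{(k+1)}_{2\mathbf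 m+\boldsymbol\sigma})$; generated by the series via $\tau(\Delta^{(k)})=2^{-kd}S_{2^k\mathbf 1}(\mathbf g)$, $\mathbf g\in\Delta^{(k)}$. The support $\operatorname{supp}\tau$ is $\mathbb G^d\setminus U$, where $U$ is the union of all dyadic cubes $\Delta_0$ such that $\tau(\Delta)=0$ for every dyadic cube $\Delta\subset\Delta_0$. *)

theory Defs
  imports Complex_Main
begin

text \<open>Dyadic group G: sequences nat => bool (bit g k = g_k). The d-th power G^d is
  modelled as 'd => (nat => bool) for a finite index type 'd with CARD('d) = d.
  Multi-indices in N_0^d are 'd => nat.\<close>

type_synonym dyadic = "nat \<Rightarrow> bool"

definition walsh :: "nat \<Rightarrow> dyadic \<Rightarrow> real" where
  "walsh n g = (\<Prod>k<n. if g k \<and> bit n k then -1 else 1)"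

definition walsh_d :: "('d::finite \<Rightarrow> nat) \<Rightarrow> ('d \<Rightarrow> dyadic) \<Rightarrow> real" where
  "walsh_d n g = (\<Prod>l\<in>UNIV. walsh (n l) (g l))"

definition psum :: "(('d::finite \<Rightarrow> nat) \<Rightarrow> real) \<Rightarrow> ('d \<Rightarrow> nat) \<Rightarrow> ('d \<Rightarrow> dyadic) \<Rightarrow> real" where
  "psum a N g = (\<Sum>n\<in>{n. \<forall>l. n l < N l}. a n * walsh_d n g)"

definition dint :: "nat \<Rightarrow> nat \<Rightarrow> dyadic set" where
  "dint k m = {g. \<forall>t<k. g t = bit m (k - 1 - t)}"

definition valid_idx :: "nat \<Rightarrow> ('d::finite \<Rightarrow> nat) \<Rightarrow> bool" where
  "valid_idx k m \<longleftrightarrow> (\<forall>l. m l < 2 ^ k)"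

definition dcube :: "nat \<Rightarrow> ('d::finite \<Rightarrow> nat) \<Rightarrow> ('d \<Rightarrow> dyadic) set" where
  "dcube k m = {g. \<forall>l. g l \<in> dint k (m l)}"

definition qmeas :: "(('d::finite \<Rightarrow> nat) \<Rightarrow> real) \<Rightarrow> nat \<Rightarrow> ('d \<Rightarrow> nat) \<Rightarrow> real" where
  "qmeas a k m = psum a (\<lambda>_. 2 ^ k) (SOME g. g \<in> dcube k m) / 2 ^ (k * card (UNIV :: 'd set))"

definition null_cube :: "(('d::finite \<Rightarrow> nat) \<Rightarrow> real) \<Rightarrow> nat \<Rightarrow> ('d \<Rightarrow> nat) \<Rightarrow> bool" where
  "null_cube a k0 m0 \<longleftrightarrow>
     (\<forall>k m. valid_idx k m \<and> dcube k m \<subseteq> dcube k0 m0 \<longrightarrow> qmeas a k m = 0)"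

definition qsupp :: "(('d::finite \<Rightarrow> nat) \<Rightarrow> real) \<Rightarrow> ('d \<Rightarrow> dyadic) set" where
  "qsupp a = UNIV - \<Union>{dcube k m | k m. valid_idx k m \<and> null_cube a k m}"

end

theory Submission
  imports Defs "HOL-Library.FuncSet"
begin

(* Let \<Delta> be a rank-w dyadic cube containing g all of whose dyadic subcubes have
   quasimeasure zero. For K \<ge> w the partial sum S_{2^K 1} is constant on rank-K cubes,
   where it equals 2^(Kd) times their quasimeasure, so it vanishes on all of \<Delta>.
   Flipping bit t \<ge> w of one coordinate keeps a point inside \<Delta> and multiplies W_n by
   -1 or 1 according to bit t of the corresponding coordinate of n; adding or subtracting
   the two values shows that the part of the sum with that bit of n prescribed still
   vanishes on \<Delta>. Prescribing all bits w, ..., K-1 isolates each block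
   {n : n div 2^w = q}, and S_{2^w M} is a sum of such blocks. *)

lemma not_bit_if_less_pow2:
  fixes n :: nat
  assumes "n < 2 ^ K" "K \<le> k"
  shows "\<not> bit n k"
  using assms by (metis bit_take_bit_iff less_le_not_le take_bit_nat_eq_self)

lemma bit_div_pow2: "bit ((n::nat) div 2 ^ w) i = bit n (w + i)"
  by (simp add: bit_iff_odd div_exp_eq)

lemma div_pow2_eq_iff_bits:
  fixes n q :: nat
  assumes "q < 2 ^ (K - w)" "w \<le> K"
  shows "n div 2 ^ w = q \<longleftrightarrow> n < 2 ^ K \<and> (\<forall>t\<in>{w..<K}. bit n t = bit q (t - w))"
proof
  assume quotient: "n div 2 ^ w = q"
  have "n < (q + 1) * 2 ^ w"
    using quotient by (metis div_less_iff_less_mult less_add_one pos2 zero_less_power)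
  also have "\<dots> \<le> 2 ^ (K - w) * 2 ^ w"
    using assms(1) by (intro mult_right_mono) auto
  also have "\<dots> = 2 ^ K"
    using assms(2) by (simp flip: power_add)
  finally show "n < 2 ^ K \<and> (\<forall>t\<in>{w..<K}. bit n t = bit q (t - w))"
    using quotient bit_div_pow2[of n w] by auto
next
  assume bits: "n < 2 ^ K \<and> (\<forall>t\<in>{w..<K}. bit n t = bit q (t - w))"
  have "bit (n div 2 ^ w) i = bit q i" for i
  proof (cases "w + i < K")
    case True
    then show ?thesis using bits by (auto simp: bit_div_pow2)
  next
    case False
    then show ?thesis
      using bits assms not_bit_if_less_pow2[of n K "w + i"] not_bit_if_less_pow2[of q "K - w" i]
      by (auto simp: bit_div_pow2)
  qed
  then show "n div 2 ^ w = q" by (simp add: bit_eq_iff)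
qed

lemma dint_exists: "\<exists>m < 2 ^ K. x \<in> dint K m"
proof -
  have "\<exists>m :: nat. m < 2 ^ K \<and> (\<forall>t<K. bit m (K - 1 - t) = x t)"
  proof (induction K)
    case 0
    then show ?case by auto
  next
    case (Suc K)
    then obtain m :: nat where m: "m < 2 ^ K" "\<forall>t<K. bit m (K - 1 - t) = x t"
      by blast
    define m' where "m' = 2 * m + of_bool (x K)"
    have "bit m' (Suc K - 1 - t) = x t" if "t < Suc K" for t
    proof (cases "t = K")
      case True
      then show ?thesis by (simp add: m'_def bit_0)
    next
      case False
      then have "Suc K - 1 - t = Suc (K - 1 - t)" using that by auto
      then show ?thesis using m(2) False that by (simp add: m'_def bit_Suc)
    qed
    moreover have "m' < 2 ^ Suc K" using m(1) by (auto simp: m'_def)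
    ultimately show ?case by blast
  qed
  then show ?thesis by (auto simp: dint_def)
qed

lemma dcube_exists: "\<exists>m. valid_idx K m \<and> h \<in> dcube K m"
proof -
  have "\<forall>l. \<exists>ml < 2 ^ K. h l \<in> dint K ml"
    using dint_exists by blast
  then obtain m where "\<forall>l. m l < 2 ^ K \<and> h l \<in> dint K (m l)"
    by metis
  then show ?thesis by (auto simp: valid_idx_def dcube_def)
qed

lemma dcube_iff_same_bits:
  assumes "h \<in> dcube K m"
  shows "x \<in> dcube K m \<longleftrightarrow> (\<forall>l. \<forall>t<K. x l t = h l t)"
  using assms by (auto simp: dcube_def dint_def)

lemma dcube_subset_if_mem:
  assumes "w \<le> K" "h \<in> dcube K m'" "h \<in> dcube w m"
  shows "dcube K m' \<subseteq> dcube w m"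
proof
  fix x assume "x \<in> dcube K m'"
  then have "\<forall>l. \<forall>t<K. x l t = h l t"
    using assms(2) dcube_iff_same_bits by blast
  then show "x \<in> dcube w m"
    using assms(1,3) dcube_iff_same_bits[of h w m x] by auto
qed

lemma walsh_eq_if_bits_below_eq:
  assumes "n < 2 ^ K" "\<forall>k<K. x k = y k"
  shows "walsh n x = walsh n y"
  unfolding walsh_def
proof (rule prod.cong[OF refl])
  fix k
  show "(if x k \<and> bit n k then -1 else 1) = (if y k \<and> bit n k then -1 else (1::real))"
    using assms not_bit_if_less_pow2[of n K k] by (cases "k < K") auto
qed

lemma psum_pow2_eq_on_dcube:
  fixes g h :: "'d::finite \<Rightarrow> dyadic"
  assumes "g \<in> dcube K m" "h \<in> dcube K m"
  shows "psum a (\<lambda>_. 2 ^ K) g = psum a (\<lambda>_. 2 ^ K) h"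
  unfolding psum_def walsh_d_def
proof (intro sum.cong arg_cong[where f = "\<lambda>x. _ * x"] prod.cong refl)
  fix n :: "'d \<Rightarrow> nat" and l
  assume "n \<in> {n. \<forall>l. n l < 2 ^ K}"
  then show "walsh (n l) (g l) = walsh (n l) (h l)"
    using assms dcube_iff_same_bits[of h K m] by (intro walsh_eq_if_bits_below_eq) auto
qed

lemma qmeas_eq_psum:
  fixes a :: "('d::finite \<Rightarrow> nat) \<Rightarrow> real"
  assumes "g \<in> dcube K m"
  shows "qmeas a K m = psum a (\<lambda>_. 2 ^ K) g / 2 ^ (K * card (UNIV :: 'd set))"
proof -
  have "(SOME g. g \<in> dcube K m) \<in> dcube K m"
    using assms some_in_eq by blast
  then show ?thesis
    unfolding qmeas_def using assms psum_pow2_eq_on_dcube by metis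
qed

lemma psum_pow2_eq_0_on_null_cube:
  assumes "null_cube a w m" "w \<le> K" "h \<in> dcube w m"
  shows "psum a (\<lambda>_. 2 ^ K) h = 0"
proof -
  obtain m' where m': "valid_idx K m'" "h \<in> dcube K m'"
    using dcube_exists by blast
  have "dcube K m' \<subseteq> dcube w m"
    using assms(2) m'(2) assms(3) by (rule dcube_subset_if_mem)
  then have "qmeas a K m' = 0"
    using assms(1) m'(1) by (auto simp: null_cube_def)
  then show ?thesis
    using qmeas_eq_psum[OF m'(2)] by simp
qed

definition flip_bit :: "'d \<Rightarrow> nat \<Rightarrow> ('d \<Rightarrow> dyadic) \<Rightarrow> 'd \<Rightarrow> dyadic" where
  "flip_bit l t h = h(l := (h l)(t := \<not> h l t))"

lemma flip_bit_in_dcube: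
  assumes "w \<le> t" "h \<in> dcube w m"
  shows "flip_bit l t h \<in> dcube w m"
  using assms by (auto simp: flip_bit_def dcube_def dint_def)

lemma walsh_flip:
  "walsh n (x(t := \<not> x t)) = (if bit n t then -1 else 1) * walsh n x"
proof (cases "t < n")
  case True
  let ?rest = "\<lambda>y. \<Prod>k\<in>{..<n} - {t}. if y k \<and> bit n k then -1 else (1::real)"
  have split: "walsh n y = (if y t \<and> bit n t then -1 else 1) * ?rest y" for y
    unfolding walsh_def using True by (subst prod.remove[of _ t]) auto
  have "?rest (x(t := \<not> x t)) = ?rest x"
    by (rule prod.cong) auto
  then show ?thesis
    using split[of x] split[of "x(t := \<not> x t)"] by (cases "x t"; cases "bit n t") simp_all
next
  case False
  then have "\<not> bit n t"
    by (meson le_less_trans less_exp not_bit_if_less_pow2 not_less order_refl)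
  moreover have "walsh n (x(t := \<not> x t)) = walsh n x"
    unfolding walsh_def using False by (intro prod.cong) auto
  ultimately show ?thesis by simp
qed

lemma walsh_d_flip_bit:
  "walsh_d n (flip_bit l t h) = (if bit (n l) t then -1 else 1) * walsh_d n h"
proof -
  have split: "walsh_d n y = walsh (n l) (y l) * (\<Prod>l'\<in>UNIV - {l}. walsh (n l') (y l'))"
    for y :: "'a \<Rightarrow> dyadic"
    unfolding walsh_d_def by (subst prod.remove[of _ l]) auto
  show ?thesis
    using split[of h] split[of "flip_bit l t h"]
    by (simp add: flip_bit_def walsh_flip)
qed

lemma finite_box: "finite {n :: 'd::finite \<Rightarrow> nat. \<forall>l. n l < N l}"
proof -
  have "{n :: 'd \<Rightarrow> nat. \<forall>l. n l < N l} = PiE UNIV (\<lambda>l. {..<N l})"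
    by (auto simp: PiE_def extensional_def)
  then show ?thesis by (simp add: finite_PiE)
qed

definition walsh_poly ::
    "(('d::finite \<Rightarrow> nat) \<Rightarrow> real) \<Rightarrow> ('d \<Rightarrow> nat) set \<Rightarrow> ('d \<Rightarrow> dyadic) \<Rightarrow> real" where
  "walsh_poly a F h = (\<Sum>n\<in>F. a n * walsh_d n h)"

lemma walsh_poly_bit_filter_eq_0:
  assumes "finite F"
    and zero: "\<forall>h\<in>D. walsh_poly a F h = 0"
    and closed: "\<forall>h\<in>D. flip_bit l t h \<in> D"
    and "h \<in> D"
  shows "walsh_poly a {n\<in>F. bit (n l) t = b} h = 0"
proof -
  let ?h' = "flip_bit l t h"
  define s :: real where "s = (if b then -1 else 1)"
  have "walsh_poly a {n\<in>F. bit (n l) t = b} h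
      = (\<Sum>n\<in>F. if bit (n l) t = b then a n * walsh_d n h else 0)"
    unfolding walsh_poly_def using \<open>finite F\<close> by (simp add: sum.inter_filter)
  also have "\<dots> = (\<Sum>n\<in>F. (a n * walsh_d n h + s * (a n * walsh_d n ?h')) / 2)"
    by (rule sum.cong) (auto simp: walsh_d_flip_bit s_def)
  also have "\<dots> = (walsh_poly a F h + s * walsh_poly a F ?h') / 2"
    unfolding walsh_poly_def by (simp add: sum.distrib sum_distrib_left flip: sum_divide_distrib)
  also have "\<dots> = 0"
    using zero closed \<open>h \<in> D\<close> by simp
  finally show ?thesis .
qed

lemma walsh_poly_bits_filter_eq_0:
  assumes "finite F" "finite S"
    and zero: "\<forall>h\<in>D. walsh_poly a F h = 0"
    and closed: "\<forall>(l, t)\<in>S. \<forall>h\<in>D. flip_bit l t h \<in> D"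
    and "h \<in> D"
  shows "walsh_poly a {n\<in>F. \<forall>(l, t)\<in>S. bit (n l) t = c l t} h = 0"
proof -
  have "\<forall>h\<in>D. walsh_poly a {n\<in>F. \<forall>(l, t)\<in>S. bit (n l) t = c l t} h = 0"
    using \<open>finite S\<close> closed
  proof (induction S rule: finite_induct)
    case empty
    then show ?case using zero by simp
  next
    case (insert p S)
    obtain l t where p: "p = (l, t)" by force
    let ?G = "{n\<in>F. \<forall>(l, t)\<in>S. bit (n l) t = c l t}"
    have "{n\<in>F. \<forall>(l, t)\<in>insert p S. bit (n l) t = c l t} = {n\<in>?G. bit (n l) t = c l t}"
      by (auto simp: p)
    moreover have "\<forall>h\<in>D. walsh_poly a ?G h = 0"
      using insert by simp
    moreover have "\<forall>h\<in>D. flip_bit l t h \<in> D"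
      using insert.prems by (simp add: p)
    ultimately show ?case
      using walsh_poly_bit_filter_eq_0[of ?G D a l t] \<open>finite F\<close> by simp
  qed
  then show ?thesis using \<open>h \<in> D\<close> by blast
qed

lemma walsh_poly_block_eq_0_on_null_cube:
  assumes "null_cube a w m" "h \<in> dcube w m"
  shows "walsh_poly a {n. \<forall>l. n l div 2 ^ w = q l} h = 0"
proof -
  define K where "K = w + (\<Sum>l\<in>UNIV. q l)"
  have q_bound: "q l < 2 ^ (K - w)" for l
  proof -
    have "q l \<le> (\<Sum>l\<in>UNIV. q l)" by (rule member_le_sum) auto
    then have "q l < 2 ^ (\<Sum>l\<in>UNIV. q l)"
      using le_less_trans less_exp by blast
    then show ?thesis by (simp add: K_def)
  qed
  have "w \<le> K" by (simp add: K_def)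
  let ?F = "{n :: 'a \<Rightarrow> nat. \<forall>l. n l < 2 ^ K}"
  have "{n. \<forall>l. n l div 2 ^ w = q l}
      = {n\<in>?F. \<forall>(l, t)\<in>UNIV \<times> {w..<K}. bit (n l) t = bit (q l) (t - w)}"
    using div_pow2_eq_iff_bits[OF q_bound \<open>w \<le> K\<close>] by auto
  moreover have "walsh_poly a {n\<in>?F. \<forall>(l, t)\<in>UNIV \<times> {w..<K}. bit (n l) t = bit (q l) (t - w)} h = 0"
  proof (rule walsh_poly_bits_filter_eq_0)
    show "\<forall>h\<in>dcube w m. walsh_poly a ?F h = 0"
      using psum_pow2_eq_0_on_null_cube[OF assms(1) \<open>w \<le> K\<close>]
      by (simp add: walsh_poly_def psum_def)
    show "\<forall>(l, t)\<in>UNIV \<times> {w..<K}. \<forall>h\<in>dcube w m. flip_bit l t h \<in> dcube w m"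
      using flip_bit_in_dcube by auto
  qed (use assms(2) finite_box in auto)
  ultimately show ?thesis by simp
qed

lemma psum_pow2_mult_eq_0_on_null_cube:
  assumes "null_cube a w m" "g \<in> dcube w m"
  shows "psum a (\<lambda>l. 2 ^ w * M l) g = 0"
proof -
  define T where "T = {n :: 'a \<Rightarrow> nat. \<forall>l. n l < 2 ^ w * M l}"
  define Q where "Q = {q :: 'a \<Rightarrow> nat. \<forall>l. q l < M l}"
  let ?block = "\<lambda>n l. n l div 2 ^ w"
  have div_less: "n div 2 ^ w < k \<longleftrightarrow> n < 2 ^ w * k" for n k :: nat
    by (metis div_less_iff_less_mult mult.commute pos2 zero_less_power)
  have "psum a (\<lambda>l. 2 ^ w * M l) g = (\<Sum>n\<in>T. a n * walsh_d n g)"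
    by (simp add: psum_def T_def)
  also have "\<dots> = (\<Sum>q\<in>Q. walsh_poly a {n\<in>T. ?block n = q} g)"
    unfolding walsh_poly_def
    by (rule sum.group[symmetric]) (auto simp: T_def Q_def finite_box div_less)
  also have "\<dots> = 0"
  proof (rule sum.neutral, intro ballI)
    fix q assume "q \<in> Q"
    then have "{n\<in>T. ?block n = q} = {n. \<forall>l. n l div 2 ^ w = q l}"
      by (auto simp: T_def Q_def simp flip: div_less)
    then show "walsh_poly a {n\<in>T. ?block n = q} g = 0"
      using walsh_poly_block_eq_0_on_null_cube[OF assms] by simp
  qed
  finally show ?thesis .
qed

theorem proposition4:
  fixes a :: "('d::finite \<Rightarrow> nat) \<Rightarrow> real" and g :: "'d \<Rightarrow> dyadic"
  assumes "card (UNIV :: 'd set) \<ge> 2"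
    and "g \<notin> qsupp a"
  shows "(\<exists>w::nat. \<forall>M. (\<forall>l. M l \<ge> 1) \<longrightarrow> psum a (\<lambda>l. 2 ^ w * M l) g = 0)
       \<and> (let w = (LEAST w. \<exists>m. valid_idx w m \<and> g \<in> dcube w m \<and> null_cube a w m)
          in \<forall>M. (\<forall>l. M l \<ge> 1) \<longrightarrow> psum a (\<lambda>l. 2 ^ w * M l) g = 0)"
proof -
  define w where "w = (LEAST w. \<exists>m. valid_idx w m \<and> g \<in> dcube w m \<and> null_cube a w m)"
  have "\<exists>w m. valid_idx w m \<and> g \<in> dcube w m \<and> null_cube a w m"
    using assms(2) by (auto simp: qsupp_def)
  then have "\<exists>m. valid_idx w m \<and> g \<in> dcube w m \<and> null_cube a w m"
    unfolding w_def by (rule LeastI_ex)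
  then obtain m where "g \<in> dcube w m" "null_cube a w m"
    by blast
  then have "\<forall>M. psum a (\<lambda>l. 2 ^ w * M l) g = 0"
    using psum_pow2_mult_eq_0_on_null_cube by blast
  then show ?thesis
    unfolding w_def[symmetric] Let_def by blast
qed

end
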